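(* Let $\Lambda$ be a lattice and let $\bar a=(a_1,\ldots,a_t)\in(\mathcal F^0(\Lambda,\bar K))^t$. For any two sublattices $\Lambda_1,\Lambda_2\subseteq\Lambda$ of finite index, $$\mathrm{CharPoly}_{\bar a,\Lambda_1+\Lambda_2}\ \Big|\ \gcd\big(\mathrm{CharPoly}_{\bar a,\Lambda_1},\,\mathrm{CharPoly}_{\bar a,\Lambda_2}\big)$$ and $$\mathrm{lcm}\big(\mathrm{CharPoly}_{\bar a,\Lambda_1},\,\mathrm{CharPoly}_{\bar a,\Lambda_2}\big)\ \Big|\ \mathrm{CharPoly}_{\bar a,\Lambda_1\cap\Lambda_2}.$$ Consequently, $\mathrm{CharPoly}_{\bar a,\Lambda_2}$ divides $\mathrm{CharPoly}_{\bar a,\Lambda_1}$ whenever $\Lambda_1\subseteq\Lambda_2$.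
   Context: Let $p$ be a prime, $K=\mathrm{GF}(p^r)$, and $\bar K$ an algebraic closure of $K$. A lattice is a free abelian group of finite rank. For an abelian group $G$ and a field $F$, $\mathcal F(G,F)$ denotes the space of all functions $G\to F$ and $\mathcal F^0(G,F)$ the subspace of finitely supported functions. For $f\in\mathcal F(G,F)$ and $a\in\mathcal F^0(G,F)$ the convolution is $(f*a)(g)=\sum_{h\in G}f(h)a(g-h)$, and $\Delta_a$ is the operator $f\mapsto f*a$. For a sublattice $\Lambda'\subseteq\Lambda$ of finite index, $\mathcal F_{\Lambda'}(\Lambda,\bar K)=\{f:\Lambda\to\bar K\,:\,f(v+w)=f(v)\ \forall v\in\Lambda,w\in\Lambda'\}$; it is finite dimensional and preserved by every $\Delta_a$. For $\bar a=(a_1,\ldots,a_t)$, $\mathrm{CharPoly}_{\bar a,\Lambda'}\in\bar K[x]$ is the monic greatest common divisor of the (monic) characteristic polynomials of the restrictions $\Delta_{a_j}|_{\mathcal F_{\Lambda'}(\Lambda,\bar K)}$, $j=1,\ldots,t$. *)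

theory Defs
  imports "Jordan_Normal_Form.Char_Poly" "HOL-Library.Function_Algebras"
    "HOL-Computational_Algebra.Polynomial_Factorial"
begin

text \<open>The field Kbar: an algebraic closure of GF(p^r) (equivalently of GF(p)).\<close>
definition is_alg_closure_of_GFp :: "nat \<Rightarrow> 'k::field itself \<Rightarrow> bool" where
  "is_alg_closure_of_GFp p _ \<longleftrightarrow>
     CHAR('k) = p \<and>
     (\<forall>q::'k poly. degree q \<ge> 1 \<longrightarrow> (\<exists>x. poly q x = 0)) \<and>
     (\<forall>x::'k. \<exists>q::'k poly. q \<noteq> 0 \<and> (\<forall>i. coeff q i \<in> range of_nat) \<and> poly q x = 0)"

text \<open>Lattices: the ambient lattice is Z^n, modelled as 'n => int with 'n finite.
  A sublattice of finite index is a subgroup with finitely many cosets.\<close>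
definition is_subgroup :: "'g::ab_group_add set \<Rightarrow> bool" where
  "is_subgroup L \<longleftrightarrow> 0 \<in> L \<and> (\<forall>x\<in>L. \<forall>y\<in>L. x + y \<in> L) \<and> (\<forall>x\<in>L. - x \<in> L)"

definition finite_index_sublattice :: "'g::ab_group_add set \<Rightarrow> bool" where
  "finite_index_sublattice L \<longleftrightarrow> is_subgroup L \<and> finite ((\<lambda>v. (\<lambda>w. v + w) ` L) ` UNIV)"

definition set_plus_grp :: "'g::ab_group_add set \<Rightarrow> 'g set \<Rightarrow> 'g set" where
  "set_plus_grp A B = {x + y | x y. x \<in> A \<and> y \<in> B}"

definition fin_supp :: "('g \<Rightarrow> 'k::zero) \<Rightarrow> bool" where
  "fin_supp a \<longleftrightarrow> finite {g. a g \<noteq> 0}"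

definition conv :: "('g::ab_group_add \<Rightarrow> 'k::comm_ring_1) \<Rightarrow> ('g \<Rightarrow> 'k) \<Rightarrow> 'g \<Rightarrow> 'k" where
  "conv f a g = (\<Sum>h | a (g - h) \<noteq> 0. f h * a (g - h))"

definition Delta :: "('g::ab_group_add \<Rightarrow> 'k::comm_ring_1) \<Rightarrow> ('g \<Rightarrow> 'k) \<Rightarrow> ('g \<Rightarrow> 'k)" where
  "Delta a f = conv f a"

definition periodic_space :: "'g::ab_group_add set \<Rightarrow> ('g \<Rightarrow> 'k) set" where
  "periodic_space L = {f. \<forall>v w. w \<in> L \<longrightarrow> f (v + w) = f v}"

definition scal :: "'k::comm_ring_1 \<Rightarrow> ('g \<Rightarrow> 'k) \<Rightarrow> ('g \<Rightarrow> 'k)" where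
  "scal c f = (\<lambda>x. c * f x)"

definition is_basis_list :: "('g \<Rightarrow> 'k::field) set \<Rightarrow> ('g \<Rightarrow> 'k) list \<Rightarrow> bool" where
  "is_basis_list V bs \<longleftrightarrow> set bs \<subseteq> V \<and> distinct bs \<and>
     \<not> module.dependent scal (set bs) \<and> module.span scal (set bs) = V"

definition coords :: "('g \<Rightarrow> 'k::field) list \<Rightarrow> ('g \<Rightarrow> 'k) \<Rightarrow> 'k list" where
  "coords bs v = (THE cs. length cs = length bs \<and>
       v = (\<Sum>i<length bs. scal (cs ! i) (bs ! i)))"

definition matrix_wrt :: "('g \<Rightarrow> 'k::field) list \<Rightarrow> (('g \<Rightarrow> 'k) \<Rightarrow> ('g \<Rightarrow> 'k)) \<Rightarrow> 'k mat" where
  "matrix_wrt bs T = mat (length bs) (length bs) (\<lambda>(i, j). coords bs (T (bs ! j)) ! i)"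

text \<open>Characteristic polynomial of the restriction of T to the finite-dimensional
  subspace V (computed in an arbitrary basis of V; it is basis independent).\<close>
definition charpoly_on :: "('g \<Rightarrow> 'k::field) set \<Rightarrow> (('g \<Rightarrow> 'k) \<Rightarrow> ('g \<Rightarrow> 'k)) \<Rightarrow> 'k poly" where
  "charpoly_on V T = char_poly (matrix_wrt (SOME bs. is_basis_list V bs) T)"

definition CharPoly :: "('g::ab_group_add \<Rightarrow> 'k::field_gcd) list \<Rightarrow> 'g set \<Rightarrow> 'k poly" where
  "CharPoly as L = Gcd ((\<lambda>a. charpoly_on (periodic_space L) (Delta a)) ` set as)"

end

theory Submission
  imports Defs
begin

(* Enlarging the lattice shrinks the space of periodic functions: L \<subseteq> L' gives
   F_L' \<subseteq> F_L. Both spaces are finite-dimensional (spanned by the indicators of the finitely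
   many cosets) and invariant under every convolution operator Delta_a. If an operator preserves
   a subspace W of V, extending a basis of W to one of V makes its matrix block upper triangular,
   so the characteristic polynomial on W divides the one on V. Hence CharPoly is antitone in the
   lattice with respect to divisibility, and the gcd and lcm bounds follow from
   L1, L2 \<subseteq> L1 + L2 and L1 \<inter> L2 \<subseteq> L1, L2, the intersection again having finite index. *)

interpretation fs: vector_space "scal :: 'k::field \<Rightarrow> ('g \<Rightarrow> 'k) \<Rightarrow> ('g \<Rightarrow> 'k)"
  by unfold_locales (auto simp: scal_def fun_eq_iff algebra_simps)

lemma sum_apply: "sum f A x = (\<Sum>i\<in>A. f i x)"
  by (induct A rule: infinite_finite_induct) auto

lemma sum_set_distinct_conv_nth:
  assumes "distinct xs"
  shows "(\<Sum>x\<in>set xs. g x) = (\<Sum>i<length xs. g (xs ! i))"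
proof -
  have "set xs = (!) xs ` {..<length xs}" by (auto simp: set_conv_nth)
  moreover have "inj_on ((!) xs) {..<length xs}" using assms by (auto intro: inj_on_nth)
  ultimately show ?thesis by (simp add: sum.reindex)
qed

definition lincomb :: "(nat \<Rightarrow> 'k::field) \<Rightarrow> ('g \<Rightarrow> 'k) list \<Rightarrow> 'g \<Rightarrow> 'k" where
  "lincomb c bs = (\<Sum>i<length bs. scal (c i) (bs ! i))"

lemma lincomb_apply: "lincomb c bs x = (\<Sum>i<length bs. c i * (bs ! i) x)"
  by (simp add: lincomb_def scal_def sum_apply)

lemma lincomb_cong: "(\<And>i. i < length bs \<Longrightarrow> c i = d i) \<Longrightarrow> lincomb c bs = lincomb d bs"
  unfolding lincomb_def by (rule sum.cong) auto

lemma lincomb_unit: "j < length bs \<Longrightarrow> lincomb (\<lambda>i. of_bool (i = j)) bs = bs ! j"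
  by (simp add: fun_eq_iff lincomb_apply of_bool_def if_distrib[of "\<lambda>c. c * _"] sum.delta
      cong: if_cong)

lemma lincomb_append_zeros:
  "lincomb (\<lambda>i. if i < length bs then c i else 0) (bs @ ds) = lincomb c bs"
proof -
  have "lincomb (\<lambda>i. if i < length bs then c i else 0) (bs @ ds)
      = (\<Sum>i<length bs. scal (c i) ((bs @ ds) ! i))"
    unfolding lincomb_def
    by (rule sum.mono_neutral_cong_right) (auto simp: scal_def fun_eq_iff)
  also have "\<dots> = lincomb c bs" unfolding lincomb_def by (rule sum.cong) (auto simp: nth_append)
  finally show ?thesis .
qed

lemma linear_lincomb:
  assumes "Vector_Spaces.linear scal scal T"
  shows "T (lincomb c bs) = lincomb c (map T bs)"
proof -
  interpret T: Vector_Spaces.linear scal scal T by fact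
  show ?thesis by (simp add: lincomb_def T.sum T.scale)
qed

lemma lincomb_lincomb:
  assumes "\<And>k. k < length cs \<Longrightarrow> cs ! k = lincomb (\<lambda>i. P i k) bs"
  shows "lincomb c cs = lincomb (\<lambda>i. \<Sum>k<length cs. P i k * c k) bs"
proof
  fix x
  have "lincomb c cs x = (\<Sum>k<length cs. \<Sum>i<length bs. P i k * c k * (bs ! i) x)"
    by (simp add: lincomb_apply assms sum_distrib_left mult_ac)
  also have "\<dots> = lincomb (\<lambda>i. \<Sum>k<length cs. P i k * c k) bs x"
    by (subst sum.swap) (simp add: lincomb_apply sum_distrib_right)
  finally show "lincomb c cs x = lincomb (\<lambda>i. \<Sum>k<length cs. P i k * c k) bs x" .
qed

lemma lincomb_coeffs_unique:
  assumes "distinct bs" "fs.independent (set bs)" "lincomb c bs = lincomb d bs" "i < length bs"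
  shows "c i = d i"
proof -
  let ?idx = "the_inv_into {..<length bs} ((!) bs)"
  have inj: "inj_on ((!) bs) {..<length bs}" using assms(1) by (simp add: inj_on_nth)
  have idx: "?idx (bs ! j) = j" if "j < length bs" for j
    by (rule the_inv_into_f_f[OF inj]) (use that in simp)
  have "(\<Sum>v\<in>set bs. scal (c (?idx v) - d (?idx v)) v) = lincomb c bs - lincomb d bs"
    by (simp add: sum_set_distinct_conv_nth[OF assms(1)] idx lincomb_apply fun_eq_iff
        scal_def sum_apply sum_subtractf left_diff_distrib)
  also have "\<dots> = 0" using assms(3) by simp
  finally have "c (?idx (bs ! i)) - d (?idx (bs ! i)) = 0"
    by (rule fs.independentD[OF assms(2) finite_set subset_refl]) (use assms(4) in simp)
  then show ?thesis using idx[OF assms(4)] by simp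
qed

lemma coords_lincomb:
  assumes "is_basis_list V bs" "i < length bs"
  shows "coords bs (lincomb c bs) ! i = c i"
proof -
  have "coords bs (lincomb c bs) = map c [0..<length bs]"
    unfolding coords_def
  proof (rule the_equality)
    show "length (map c [0..<length bs]) = length bs \<and>
        lincomb c bs = (\<Sum>i<length bs. scal (map c [0..<length bs] ! i) (bs ! i))"
      by (simp add: lincomb_def)
  next
    fix cs assume cs: "length cs = length bs \<and> lincomb c bs = (\<Sum>i<length bs. scal (cs ! i) (bs ! i))"
    show "cs = map c [0..<length bs]"
    proof (rule nth_equalityI)
      fix j assume "j < length cs"
      then show "cs ! j = map c [0..<length bs] ! j"
        using cs assms(1) lincomb_coeffs_unique[of bs "(!) cs" c j]
        by (simp add: lincomb_def is_basis_list_def)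
    qed (use cs in simp)
  qed
  then show ?thesis using assms(2) by simp
qed

lemma lincomb_coords:
  assumes "is_basis_list V bs" "v \<in> V"
  shows "lincomb (\<lambda>i. coords bs v ! i) bs = v"
proof -
  have "v \<in> fs.span (set bs)" using assms by (simp add: is_basis_list_def)
  then obtain u where u: "v = (\<Sum>b\<in>set bs. scal (u b) b)" by (auto simp: fs.span_finite)
  then have "v = lincomb (\<lambda>i. u (bs ! i)) bs"
    using assms(1) by (simp add: is_basis_list_def sum_set_distinct_conv_nth lincomb_def)
  then show ?thesis by (auto simp: coords_lincomb[OF assms(1)] intro: lincomb_cong)
qed

lemma is_basis_list_length_eq:
  assumes "is_basis_list V bs" "is_basis_list V cs"
  shows "length bs = length cs"
proof -
  have "card (set bs) = fs.dim V" "card (set cs) = fs.dim V"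
    using assms unfolding is_basis_list_def by (auto intro: fs.dim_unique[symmetric])
  then show ?thesis using assms by (simp add: is_basis_list_def distinct_card)
qed

lemma ex_basis_list:
  assumes "fs.subspace V" "finite S" "V \<subseteq> fs.span S"
  shows "\<exists>bs. is_basis_list V bs"
proof -
  obtain B where B: "B \<subseteq> V" "fs.independent B" "V \<subseteq> fs.span B" by (rule fs.basis_exists)
  have "finite B" using fs.independent_span_bound[OF assms(2) B(2)] B(1) assms(3) by auto
  then obtain bs where bs: "set bs = B" "distinct bs" using finite_distinct_list by auto
  have "fs.span B = V" using B fs.span_minimal[OF B(1) assms(1)] by auto
  then show ?thesis using bs B by (auto simp: is_basis_list_def)
qed

lemma ex_basis_list_append:
  assumes "is_basis_list W bw" "is_basis_list V bv" "W \<subseteq> V"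
  shows "\<exists>ds. is_basis_list V (bw @ ds)"
proof -
  have ind: "fs.independent (set bw)" and bwV: "set bw \<subseteq> V"
    using assms(1,3) by (auto simp: is_basis_list_def)
  obtain C where C: "set bw \<subseteq> C" "C \<subseteq> V" "fs.independent C" "V \<subseteq> fs.span C"
    using fs.maximal_independent_subset_extend[OF bwV ind] by blast
  have V: "V = fs.span (set bv)" using assms(2) by (simp add: is_basis_list_def)
  have "finite C" using fs.independent_span_bound[of "set bv" C] C V by auto
  then obtain ds where ds: "set ds = C - set bw" "distinct ds"
    using finite_distinct_list[of "C - set bw"] by auto
  have "fs.span C = V" using C V fs.span_minimal[OF C(2)] fs.subspace_span by blast
  moreover have "set (bw @ ds) = C" using ds C(1) by auto
  ultimately have "is_basis_list V (bw @ ds)"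
    using ds C assms(1) by (auto simp: is_basis_list_def)
  then show ?thesis ..
qed

definition coord_mat :: "('g \<Rightarrow> 'k::field) list \<Rightarrow> ('g \<Rightarrow> 'k) list \<Rightarrow> 'k mat" where
  "coord_mat bs cs = mat (length bs) (length cs) (\<lambda>(i, j). coords bs (cs ! j) ! i)"

lemma coord_mat_carrier: "coord_mat bs cs \<in> carrier_mat (length bs) (length cs)"
  by (simp add: coord_mat_def)

lemma matrix_wrt_eq_coord_mat: "matrix_wrt bs T = coord_mat bs (map T bs)"
  by (rule eq_matI) (auto simp: matrix_wrt_def coord_mat_def)

lemma dim_matrix_wrt [simp]:
  "dim_row (matrix_wrt bs T) = length bs" "dim_col (matrix_wrt bs T) = length bs"
  by (simp_all add: matrix_wrt_def)

lemma matrix_wrt_carrier: "matrix_wrt bs T \<in> carrier_mat (length bs) (length bs)"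
  by (rule carrier_matI) simp_all

lemma lincomb_coord_mat_col:
  assumes "is_basis_list V bs" "set cs \<subseteq> V" "j < length cs"
  shows "lincomb (\<lambda>i. coord_mat bs cs $$ (i, j)) bs = cs ! j"
proof -
  have "lincomb (\<lambda>i. coord_mat bs cs $$ (i, j)) bs = lincomb (\<lambda>i. coords bs (cs ! j) ! i) bs"
    by (rule lincomb_cong) (use assms(3) in \<open>simp add: coord_mat_def\<close>)
  also have "\<dots> = cs ! j" using assms by (intro lincomb_coords) auto
  finally show ?thesis .
qed

lemma lincomb_mult_coord_mat_col:
  assumes "is_basis_list V bs" "set cs \<subseteq> V" "B \<in> carrier_mat (length cs) m" "j < m"
  shows "lincomb (\<lambda>i. (coord_mat bs cs * B) $$ (i, j)) bs = lincomb (\<lambda>k. B $$ (k, j)) cs"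
proof -
  let ?P = "coord_mat bs cs"
  have "lincomb (\<lambda>k. B $$ (k, j)) cs = lincomb (\<lambda>i. \<Sum>k<length cs. ?P $$ (i, k) * B $$ (k, j)) bs"
    by (rule lincomb_lincomb) (use lincomb_coord_mat_col[OF assms(1,2)] in simp)
  also have "\<dots> = lincomb (\<lambda>i. (?P * B) $$ (i, j)) bs"
    by (rule lincomb_cong) (use assms(3,4) in \<open>simp add: coord_mat_def scalar_prod_def atLeast0LessThan\<close>)
  finally show ?thesis by simp
qed

lemma mat_eqI_lincomb_cols:
  assumes "is_basis_list V bs" "A \<in> carrier_mat (length bs) m" "B \<in> carrier_mat (length bs) m"
    and "\<And>j. j < m \<Longrightarrow> lincomb (\<lambda>i. A $$ (i, j)) bs = lincomb (\<lambda>i. B $$ (i, j)) bs"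
  shows "A = B"
proof (rule eq_matI)
  fix i j assume "i < dim_row B" "j < dim_col B"
  then show "A $$ (i, j) = B $$ (i, j)"
    using assms lincomb_coeffs_unique[of bs "\<lambda>i. A $$ (i, j)" "\<lambda>i. B $$ (i, j)" i]
    by (auto simp: is_basis_list_def)
qed (use assms(2,3) in auto)

lemma coord_mat_mult_coord_mat:
  assumes bs: "is_basis_list V bs" and cs: "is_basis_list V cs"
  shows "coord_mat bs cs * coord_mat cs bs = 1\<^sub>m (length bs)"
proof -
  have len: "length cs = length bs" by (rule is_basis_list_length_eq[OF cs bs])
  have sets: "set bs \<subseteq> V" "set cs \<subseteq> V" using bs cs by (auto simp: is_basis_list_def)
  have "lincomb (\<lambda>i. (coord_mat bs cs * coord_mat cs bs) $$ (i, j)) bs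
      = lincomb (\<lambda>i. 1\<^sub>m (length bs) $$ (i, j)) bs" if j: "j < length bs" for j
  proof -
    have "lincomb (\<lambda>i. (coord_mat bs cs * coord_mat cs bs) $$ (i, j)) bs
        = lincomb (\<lambda>k. coord_mat cs bs $$ (k, j)) cs"
      by (rule lincomb_mult_coord_mat_col[OF bs sets(2) coord_mat_carrier j])
    also have "\<dots> = bs ! j" by (rule lincomb_coord_mat_col[OF cs sets(1) j])
    also have "\<dots> = lincomb (\<lambda>i. of_bool (i = j)) bs" using j by (rule lincomb_unit[symmetric])
    also have "\<dots> = lincomb (\<lambda>i. 1\<^sub>m (length bs) $$ (i, j)) bs"
      by (rule lincomb_cong) (use j in simp)
    finally show ?thesis .
  qed
  then show ?thesis
    by (intro mat_eqI_lincomb_cols[OF bs]) (use len in \<open>auto simp: coord_mat_def\<close>)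
qed

lemma matrix_wrt_similar:
  assumes bs: "is_basis_list V bs" and cs: "is_basis_list V cs"
    and T: "Vector_Spaces.linear scal scal T" "T ` V \<subseteq> V"
  shows "similar_mat (matrix_wrt bs T) (matrix_wrt cs T)"
proof -
  let ?n = "length bs"
  let ?P = "coord_mat bs cs" and ?Q = "coord_mat cs bs"
  let ?Mb = "matrix_wrt bs T" and ?Mc = "matrix_wrt cs T"
  have len: "length cs = ?n" by (rule is_basis_list_length_eq[OF cs bs])
  have sets: "set bs \<subseteq> V" "set cs \<subseteq> V" "set (map T bs) \<subseteq> V" "set (map T cs) \<subseteq> V"
    using bs cs T(2) by (auto simp: is_basis_list_def)
  have car: "?Mb \<in> carrier_mat ?n ?n" "?Mc \<in> carrier_mat ?n ?n"
    "?P \<in> carrier_mat ?n ?n" "?Q \<in> carrier_mat ?n ?n"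
    using matrix_wrt_carrier[of bs T] matrix_wrt_carrier[of cs T]
      coord_mat_carrier[of bs cs] coord_mat_carrier[of cs bs] by (simp_all only: len)
  have "lincomb (\<lambda>i. (?Mb * ?P) $$ (i, j)) bs = lincomb (\<lambda>i. (?P * ?Mc) $$ (i, j)) bs"
    if j: "j < ?n" for j
  proof -
    have "lincomb (\<lambda>i. (?Mb * ?P) $$ (i, j)) bs = lincomb (\<lambda>k. ?P $$ (k, j)) (map T bs)"
      unfolding matrix_wrt_eq_coord_mat[of bs]
      by (rule lincomb_mult_coord_mat_col[OF bs sets(3)]) (use j len in \<open>simp_all add: coord_mat_def\<close>)
    also have "\<dots> = T (lincomb (\<lambda>k. ?P $$ (k, j)) bs)" by (rule linear_lincomb[OF T(1), symmetric])
    also have "\<dots> = T (cs ! j)" using lincomb_coord_mat_col[OF bs sets(2)] j len by simp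
    also have "\<dots> = lincomb (\<lambda>k. ?Mc $$ (k, j)) cs"
      using lincomb_coord_mat_col[OF cs sets(4)] j len by (simp add: matrix_wrt_eq_coord_mat)
    also have "\<dots> = lincomb (\<lambda>i. (?P * ?Mc) $$ (i, j)) bs"
      by (rule lincomb_mult_coord_mat_col[OF bs sets(2), symmetric])
        (use j len in \<open>simp_all add: matrix_wrt_def\<close>)
    finally show ?thesis .
  qed
  then have intertwine: "?Mb * ?P = ?P * ?Mc"
    by (intro mat_eqI_lincomb_cols[OF bs, where m = ?n]) (use car in auto)
  have PQ: "?P * ?Q = 1\<^sub>m ?n" by (rule coord_mat_mult_coord_mat[OF bs cs])
  have QP: "?Q * ?P = 1\<^sub>m ?n" using coord_mat_mult_coord_mat[OF cs bs] len by simp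
  have "?Mb = ?Mb * (?P * ?Q)" using PQ right_mult_one_mat[OF car(1)] by simp
  also have "\<dots> = ?Mb * ?P * ?Q" by (rule assoc_mult_mat[symmetric, OF car(1,3,4)])
  also have "\<dots> = ?P * ?Mc * ?Q" by (simp only: intertwine)
  finally show ?thesis by (intro similar_matI[OF _ PQ QP]) (use car in auto)
qed

lemma charpoly_on_eq:
  assumes "is_basis_list V bs" "Vector_Spaces.linear scal scal T" "T ` V \<subseteq> V"
  shows "charpoly_on V T = char_poly (matrix_wrt bs T)"
proof -
  have "is_basis_list V (SOME bs. is_basis_list V bs)" using assms(1) by (rule someI)
  then show ?thesis
    unfolding charpoly_on_def by (intro char_poly_similar matrix_wrt_similar[OF _ assms])
qed

lemma char_poly_four_block_lower_zero:
  fixes A1 :: "'a::field mat"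
  assumes A1: "A1 \<in> carrier_mat n n" and A2: "A2 \<in> carrier_mat n m" and A4: "A4 \<in> carrier_mat m m"
  shows "char_poly (four_block_mat A1 A2 (0\<^sub>m m n) A4) = char_poly A1 * char_poly A4"
proof -
  let ?char_mat = "\<lambda>A. [:0, 1:] \<cdot>\<^sub>m 1\<^sub>m (dim_row A) + map_mat (\<lambda>a. [:- a:]) A"
  have "char_poly (four_block_mat A1 A2 (0\<^sub>m m n) A4)
      = det (?char_mat (four_block_mat A1 A2 (0\<^sub>m m n) A4))"
    unfolding char_poly_defs using A1 A4 by simp
  also have "?char_mat (four_block_mat A1 A2 (0\<^sub>m m n) A4)
      = four_block_mat (?char_mat A1) (map_mat (\<lambda>a. [:- a:]) A2) (0\<^sub>m m n) (?char_mat A4)"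
    by (rule eq_matI) (use A1 A2 A4 in \<open>auto simp: one_poly_def\<close>)
  also have "det \<dots> = det (?char_mat A1) * det (?char_mat A4)"
    by (rule det_four_block_mat_lower_left_zero[OF _ _ refl]) (use A1 A2 A4 in auto)
  also have "\<dots> = char_poly A1 * char_poly A4" unfolding char_poly_defs ..
  finally show ?thesis .
qed

lemma matrix_wrt_append_invariant:
  assumes cs: "is_basis_list V (bw @ ds)" and bw: "is_basis_list W bw" and T: "T ` W \<subseteq> W"
  obtains A2 A4 where "A2 \<in> carrier_mat (length bw) (length ds)" "A4 \<in> carrier_mat (length ds) (length ds)"
    "matrix_wrt (bw @ ds) T = four_block_mat (matrix_wrt bw T) A2 (0\<^sub>m (length ds) (length bw)) A4"
proof -
  let ?n = "length bw" and ?m = "length ds"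
  let ?M = "matrix_wrt (bw @ ds) T" and ?Mw = "matrix_wrt bw T"
  have lower_left: "?M $$ (i, j) = (if i < ?n then ?Mw $$ (i, j) else 0)"
    if i: "i < ?n + ?m" and j: "j < ?n" for i j
  proof -
    have "set (map T bw) \<subseteq> W" using bw T by (auto simp: is_basis_list_def)
    then have "T ((bw @ ds) ! j) = lincomb (\<lambda>i. ?Mw $$ (i, j)) bw"
      using lincomb_coord_mat_col[OF bw] j by (simp add: matrix_wrt_eq_coord_mat nth_append)
    also have "\<dots> = lincomb (\<lambda>i. if i < ?n then ?Mw $$ (i, j) else 0) (bw @ ds)"
      by (rule lincomb_append_zeros[symmetric])
    finally have "coords (bw @ ds) (T ((bw @ ds) ! j)) ! i = (if i < ?n then ?Mw $$ (i, j) else 0)"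
      using coords_lincomb[OF cs] i by simp
    then show ?thesis using i j by (simp add: matrix_wrt_def)
  qed
  define A2 where "A2 = mat ?n ?m (\<lambda>(i, j). ?M $$ (i, ?n + j))"
  define A4 where "A4 = mat ?m ?m (\<lambda>(i, j). ?M $$ (?n + i, ?n + j))"
  have "A2 \<in> carrier_mat ?n ?m" "A4 \<in> carrier_mat ?m ?m" unfolding A2_def A4_def by (rule mat_carrier)+
  moreover have "?M = four_block_mat ?Mw A2 (0\<^sub>m ?m ?n) A4"
    by (rule eq_matI) (auto simp: lower_left A2_def A4_def)
  ultimately show ?thesis by (rule that)
qed

lemma charpoly_on_dvd_of_invariant_subspace:
  assumes bv: "is_basis_list V bv" and W: "fs.subspace W" "W \<subseteq> V"
    and T: "Vector_Spaces.linear scal scal T" "T ` V \<subseteq> V" "T ` W \<subseteq> W"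
  shows "charpoly_on W T dvd charpoly_on V T"
proof -
  have "W \<subseteq> fs.span (set bv)" using bv W(2) by (simp add: is_basis_list_def)
  then obtain bw where bw: "is_basis_list W bw" using ex_basis_list[OF W(1) finite_set] by blast
  obtain ds where cs: "is_basis_list V (bw @ ds)" using ex_basis_list_append[OF bw bv W(2)] ..
  obtain A2 A4 where A: "A2 \<in> carrier_mat (length bw) (length ds)" "A4 \<in> carrier_mat (length ds) (length ds)"
    and M: "matrix_wrt (bw @ ds) T = four_block_mat (matrix_wrt bw T) A2 (0\<^sub>m (length ds) (length bw)) A4"
    by (rule matrix_wrt_append_invariant[OF cs bw T(3)])
  have "charpoly_on V T = char_poly (matrix_wrt (bw @ ds) T)" by (rule charpoly_on_eq[OF cs T(1,2)])
  also have "\<dots> = charpoly_on W T * char_poly A4"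
    unfolding M charpoly_on_eq[OF bw T(1,3)]
    by (rule char_poly_four_block_lower_zero[OF matrix_wrt_carrier A])
  finally show ?thesis by simp
qed

lemma periodic_space_subspace: "fs.subspace (periodic_space L)"
  unfolding fs.subspace_def periodic_space_def by (auto simp: scal_def)

lemma periodic_space_antimono: "L \<subseteq> L' \<Longrightarrow> periodic_space L' \<subseteq> periodic_space L"
  unfolding periodic_space_def by auto

lemma periodic_space_const_on_coset:
  assumes "f \<in> periodic_space L" "y \<in> (+) x ` L"
  shows "f y = f x"
  using assms unfolding periodic_space_def by auto

lemma linear_Delta: "Vector_Spaces.linear scal scal (Delta a)"
  unfolding Vector_Spaces.linear_iff
  by (simp add: fs.vector_space_axioms fun_eq_iff Delta_def conv_def scal_def
      sum.distrib distrib_right sum_distrib_left mult.assoc)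

lemma Delta_periodic_space:
  fixes a :: "'g::ab_group_add \<Rightarrow> 'k::comm_ring_1"
  shows "Delta a ` periodic_space L \<subseteq> periodic_space L"
proof (rule image_subsetI)
  fix f :: "'g \<Rightarrow> 'k" assume f: "f \<in> periodic_space L"
  show "Delta a f \<in> periodic_space L"
    unfolding periodic_space_def
  proof (intro CollectI allI impI)
    fix v w assume w: "w \<in> L"
    have per: "f (k + w) = f k" for k using f w by (simp add: periodic_space_def)
    have shift: "f (k - w) = f k" for k using per[of "k - w"] by simp
    have "Delta a f (v + w) = (\<Sum>h | a (v + w - h) \<noteq> 0. f h * a (v + w - h))"
      by (simp add: Delta_def conv_def)
    also have "\<dots> = (\<Sum>k | a (v - k) \<noteq> 0. f k * a (v - k))"
      by (rule sum.reindex_bij_witness[of _ "\<lambda>k. k + w" "\<lambda>h. h - w"])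
        (auto simp: shift algebra_simps)
    also have "\<dots> = Delta a f v" by (simp add: Delta_def conv_def)
    finally show "Delta a f (v + w) = Delta a f v" .
  qed
qed

lemma coset_eq_if_mem:
  assumes "is_subgroup L" "x \<in> (+) v ` L"
  shows "(+) v ` L = (+) x ` L"
proof -
  have add: "a + b \<in> L" and neg: "- a \<in> L" if "a \<in> L" "b \<in> L" for a b
    using assms(1) that unfolding is_subgroup_def by blast+
  obtain l where l: "l \<in> L" "x = v + l" using assms(2) by blast
  show ?thesis
  proof (intro equalityI image_subsetI)
    fix w assume w: "w \<in> L"
    have "v + w = x + (w + - l)" using l(2) by simp
    then show "v + w \<in> (+) x ` L" using add[OF w neg[OF l(1) w]] by blast
  next
    fix w assume w: "w \<in> L"
    have "x + w = v + (l + w)" using l(2) by (simp add: add.assoc)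
    then show "x + w \<in> (+) v ` L" using add[OF l(1) w] by blast
  qed
qed

lemma periodic_space_subset_span_cosets:
  fixes L :: "'g::ab_group_add set"
  assumes "finite_index_sublattice L"
  defines "cosets \<equiv> (\<lambda>v. (+) v ` L) ` UNIV"
  shows "periodic_space L \<subseteq> fs.span ((\<lambda>C x. of_bool (x \<in> C) :: 'k::field) ` cosets)"
proof
  have L: "is_subgroup L" and fin: "finite cosets"
    using assms by (simp_all add: finite_index_sublattice_def)
  fix f :: "'g \<Rightarrow> 'k" assume f: "f \<in> periodic_space L"
  have "f = (\<Sum>C\<in>cosets. scal (f (SOME y. y \<in> C)) (\<lambda>x. of_bool (x \<in> C)))"
  proof
    fix x
    have x: "x \<in> (+) x ` L" by (rule image_eqI[of _ _ 0]) (use L in \<open>simp_all add: is_subgroup_def\<close>)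
    have summand: "f (SOME y. y \<in> C) * of_bool (x \<in> C) = (if C = (+) x ` L then f x else 0)"
      if "C \<in> cosets" for C
    proof (cases "x \<in> C")
      case True
      obtain v where "C = (+) v ` L" using \<open>C \<in> cosets\<close> by (auto simp: cosets_def)
      then have C: "C = (+) x ` L" using True coset_eq_if_mem[OF L, of x v] by simp
      have "(SOME y. y \<in> C) \<in> (+) x ` L" using True C by (metis someI)
      then have "f (SOME y. y \<in> C) = f x" by (rule periodic_space_const_on_coset[OF f])
      then show ?thesis using C True by simp
    qed (use x in auto)
    have "(\<Sum>C\<in>cosets. scal (f (SOME y. y \<in> C)) (\<lambda>x. of_bool (x \<in> C))) x
        = (\<Sum>C\<in>cosets. f (SOME y. y \<in> C) * of_bool (x \<in> C))"
      by (simp add: sum_apply scal_def)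
    also have "\<dots> = (\<Sum>C\<in>cosets. if C = (+) x ` L then f x else 0)"
      by (rule sum.cong[OF refl summand])
    also have "\<dots> = f x" using fin by (simp add: cosets_def sum.delta)
    finally show "f x = (\<Sum>C\<in>cosets. scal (f (SOME y. y \<in> C)) (\<lambda>x. of_bool (x \<in> C))) x" ..
  qed
  also have "\<dots> \<in> fs.span ((\<lambda>C x. of_bool (x \<in> C)) ` cosets)"
    by (intro fs.span_sum fs.span_scale fs.span_base) auto
  finally show "f \<in> fs.span ((\<lambda>C x. of_bool (x \<in> C)) ` cosets)" .
qed

lemma periodic_space_ex_basis_list:
  assumes "finite_index_sublattice L"
  shows "\<exists>bs. is_basis_list (periodic_space L) bs"
  using ex_basis_list[OF periodic_space_subspace _ periodic_space_subset_span_cosets[OF assms]] assms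
  by (simp add: finite_index_sublattice_def)

lemma CharPoly_antimono:
  fixes as :: "('g::ab_group_add \<Rightarrow> 'k::field_gcd) list"
  assumes "finite_index_sublattice L" "L \<subseteq> L'"
  shows "CharPoly as L' dvd CharPoly as L"
proof -
  obtain bs :: "('g \<Rightarrow> 'k) list" where "is_basis_list (periodic_space L) bs"
    using periodic_space_ex_basis_list[OF assms(1)] by blast
  then have "charpoly_on (periodic_space L') (Delta a) dvd charpoly_on (periodic_space L) (Delta a)"
    for a :: "'g \<Rightarrow> 'k"
    by (rule charpoly_on_dvd_of_invariant_subspace[OF _ periodic_space_subspace
          periodic_space_antimono[OF assms(2)] linear_Delta Delta_periodic_space Delta_periodic_space])
  then show ?thesis
    unfolding CharPoly_def by (intro Gcd_greatest) (auto intro: dvd_trans[OF Gcd_dvd])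
qed

lemma finite_index_sublattice_Int:
  fixes L1 L2 :: "'g::ab_group_add set"
  assumes "finite_index_sublattice L1" "finite_index_sublattice L2"
  shows "finite_index_sublattice (L1 \<inter> L2)"
proof -
  let ?cosets = "\<lambda>L. (\<lambda>v. (+) v ` L) ` (UNIV :: 'g set)"
  have "?cosets (L1 \<inter> L2) \<subseteq> (\<lambda>(A, B). A \<inter> B) ` (?cosets L1 \<times> ?cosets L2)"
  proof (intro image_subsetI)
    fix v
    have "(+) v ` (L1 \<inter> L2) = (+) v ` L1 \<inter> (+) v ` L2" by (rule image_Int) (simp add: inj_on_def)
    then show "(+) v ` (L1 \<inter> L2) \<in> (\<lambda>(A, B). A \<inter> B) ` (?cosets L1 \<times> ?cosets L2)" by auto
  qed
  moreover have "finite ((\<lambda>(A, B). A \<inter> B) ` (?cosets L1 \<times> ?cosets L2))"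
    using assms by (simp add: finite_index_sublattice_def)
  ultimately have "finite (?cosets (L1 \<inter> L2))" by (rule finite_subset)
  moreover have "is_subgroup (L1 \<inter> L2)"
    using assms by (auto simp: finite_index_sublattice_def is_subgroup_def)
  ultimately show ?thesis by (simp add: finite_index_sublattice_def)
qed

lemma set_plus_grp_upper1: "0 \<in> B \<Longrightarrow> A \<subseteq> set_plus_grp A B"
  unfolding set_plus_grp_def by force

lemma set_plus_grp_upper2: "0 \<in> A \<Longrightarrow> B \<subseteq> set_plus_grp A B"
  unfolding set_plus_grp_def by force

theorem theorem2p4:
  fixes p :: nat
    and as :: "(('n::finite \<Rightarrow> int) \<Rightarrow> 'k::field_gcd) list"
    and L1 L2 :: "('n \<Rightarrow> int) set"
  assumes "prime p"
    and "is_alg_closure_of_GFp p TYPE('k)"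
    and "\<forall>a \<in> set as. fin_supp a"
    and "finite_index_sublattice L1"
    and "finite_index_sublattice L2"
  shows "CharPoly as (set_plus_grp L1 L2) dvd gcd (CharPoly as L1) (CharPoly as L2)
       \<and> lcm (CharPoly as L1) (CharPoly as L2) dvd CharPoly as (L1 \<inter> L2)
       \<and> (L1 \<subseteq> L2 \<longrightarrow> CharPoly as L2 dvd CharPoly as L1)"
proof (intro conjI impI)
  have "0 \<in> L1" "0 \<in> L2"
    using assms(4,5) by (auto simp: finite_index_sublattice_def is_subgroup_def)
  then show "CharPoly as (set_plus_grp L1 L2) dvd gcd (CharPoly as L1) (CharPoly as L2)"
    using CharPoly_antimono[OF assms(4) set_plus_grp_upper1]
      CharPoly_antimono[OF assms(5) set_plus_grp_upper2]
    by (intro gcd_greatest)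
  have "finite_index_sublattice (L1 \<inter> L2)" by (rule finite_index_sublattice_Int[OF assms(4,5)])
  then show "lcm (CharPoly as L1) (CharPoly as L2) dvd CharPoly as (L1 \<inter> L2)"
    using CharPoly_antimono by (intro lcm_least) auto
  show "CharPoly as L2 dvd CharPoly as L1" if "L1 \<subseteq> L2"
    by (rule CharPoly_antimono[OF assms(4) that])
qed

end
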